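(* For every integer $n\ge 1$, $$2^n\hat{A}_n(x)=\sum_{\sigma\in\mathfrak S_n}(1+x)^{\mathrm{dda}(\sigma)}\,2^{\mathrm{val}(\sigma)}\,(1+x^2)^{\mathrm{pk}(\sigma)},$$ where the statistics $\mathrm{dda},\mathrm{val},\mathrm{pk}$ are computed with the convention $\sigma(0)=\sigma(n+1)=n+1$; and $$\hat{B}_n(x)=\sum_{\sigma\in\mathfrak S_n}(1+x)^{\mathrm{dda}^0(\sigma)}\,2^{\mathrm{val}^0(\sigma)}\,(1+x^2)^{\mathrm{pk}^0(\sigma)},$$ where the statistics $\mathrm{dda}^0,\mathrm{val}^0,\mathrm{pk}^0$ are computed with the convention $\sigma(0)=0$, $\sigma(n+1)=n+1$.
   Context: $\mathfrak S_n$ is the symmetric group on $[n]=\{1,\dots,n\}$, permutations written as words $\sigma(1)\cdots\sigma(n)$. For $\sigma\in\mathfrak S_n$, an index $i\in[n-1]$ is an alternating descent of $\sigma$ if either $\sigma(i)>\sigma(i+1)$ and $i$ is odd, or $\sigma(i)<\sigma(i+1)$ and $i$ is even; $\hat d(\sigma)$ is the number of alternating descents and $\hat A_n(x)=\sum_{\sigma\in\mathfrak S_n}x^{\hat d(\sigma)}$. $\mathcal B_n$ is the set of signed permutations: bijections $\pi$ of $\{\pm1,\dots,\pm n\}$ with $\pi(-i)=-\pi(i)$, identified with the word $\pi(1)\cdots\pi(n)$, and always prepended with $\pi(0)=0$. An index $i\in\{0\}\cup[n-1]$ is an alternating descent of $\pi\in\mathcal B_n$ if either $\pi(i)<\pi(i+1)$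 and $i$ is even, or $\pi(i)>\pi(i+1)$ and $i$ is odd; $\hat d_B(\pi)$ is their number and $\hat B_n(x)=\sum_{\pi\in\mathcal B_n}x^{\hat d_B(\pi)}$. Given $\sigma\in\mathfrak S_n$ extended by values $\sigma(0)$ and $\sigma(n+1)$ (according to a stated convention), an index $i\in[n]$ is a double ascent if $\sigma(i-1)<\sigma(i)<\sigma(i+1)$, a double descent if $\sigma(i-1)>\sigma(i)>\sigma(i+1)$, a valley if $\sigma(i-1)>\sigma(i)<\sigma(i+1)$, and a peak if $\sigma(i-1)<\sigma(i)>\sigma(i+1)$. $\mathrm{val}$ and $\mathrm{pk}$ denote the numbers of valleys and peaks, and $\mathrm{dda}$ the number of double ascents plus double descents. *)

theory Defs
  imports "HOL-Combinatorics.Combinatorics"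
begin

text \<open>Permutations of [n] are functions nat => nat that permute {1..n}
  (identity elsewhere); sigma i is the i-th letter of the word.\<close>

definition perms :: "nat \<Rightarrow> (nat \<Rightarrow> nat) set" where
  "perms n = {\<sigma>. \<sigma> permutes {1..n}}"

definition altdes :: "nat \<Rightarrow> (nat \<Rightarrow> nat) \<Rightarrow> nat" where
  "altdes n \<sigma> = card {i \<in> {1..<n}.
      (\<sigma> i > \<sigma> (i+1) \<and> odd i) \<or> (\<sigma> i < \<sigma> (i+1) \<and> even i)}"

definition hatA :: "nat \<Rightarrow> 'a::comm_ring_1 \<Rightarrow> 'a" where
  "hatA n x = (\<Sum>\<sigma>\<in>perms n. x ^ altdes n \<sigma>)"

text \<open>Signed permutations: pi :: int => int permuting {-n..n} - {0}
  with pi(-i) = -pi(i); in particular pi(0) = 0.\<close>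

definition signed_perms :: "nat \<Rightarrow> (int \<Rightarrow> int) set" where
  "signed_perms n = {\<pi>. \<pi> permutes ({- int n..int n} - {0}) \<and> (\<forall>i. \<pi> (- i) = - \<pi> i)}"

definition altdesB :: "nat \<Rightarrow> (int \<Rightarrow> int) \<Rightarrow> nat" where
  "altdesB n \<pi> = card {i \<in> {0..<n}.
      (\<pi> (int i) < \<pi> (int i + 1) \<and> even i) \<or> (\<pi> (int i) > \<pi> (int i + 1) \<and> odd i)}"

definition hatB :: "nat \<Rightarrow> 'a::comm_ring_1 \<Rightarrow> 'a" where
  "hatB n x = (\<Sum>\<pi>\<in>signed_perms n. x ^ altdesB n \<pi>)"

definition ext :: "nat \<Rightarrow> nat \<Rightarrow> nat \<Rightarrow> (nat \<Rightarrow> nat) \<Rightarrow> nat \<Rightarrow> nat" where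
  "ext a b n \<sigma> i = (if i = 0 then a else if i = n + 1 then b else \<sigma> i)"

definition dda :: "nat \<Rightarrow> nat \<Rightarrow> nat \<Rightarrow> (nat \<Rightarrow> nat) \<Rightarrow> nat" where
  "dda a b n \<sigma> = card {i \<in> {1..n}.
      let e = ext a b n \<sigma> in
      (e (i-1) < e i \<and> e i < e (i+1)) \<or> (e (i-1) > e i \<and> e i > e (i+1))}"

definition val :: "nat \<Rightarrow> nat \<Rightarrow> nat \<Rightarrow> (nat \<Rightarrow> nat) \<Rightarrow> nat" where
  "val a b n \<sigma> = card {i \<in> {1..n}.
      let e = ext a b n \<sigma> in e (i-1) > e i \<and> e i < e (i+1)}"

definition pk :: "nat \<Rightarrow> nat \<Rightarrow> nat \<Rightarrow> (nat \<Rightarrow> nat) \<Rightarrow> nat" where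
  "pk a b n \<sigma> = card {i \<in> {1..n}.
      let e = ext a b n \<sigma> in e (i-1) < e i \<and> e i > e (i+1)}"

end

theory Submission
  imports Defs
begin

text \<open>Summing x to the number of edges (i, i+1) of \<sigma> whose larger letter lies in T over all
  T \<subseteq> [n] factorises over the letters v as a product of 1 + x^m, where m \<in> {0, 1, 2} counts the
  neighbours of v smaller than v: a valley contributes 2, a double ascent or descent 1 + x and a
  peak 1 + x^2. Giving letter k of \<sigma> the sign + iff (\<sigma> k \<in> T) = odd k turns exactly these edges
  into the alternating descents of the signed word. With \<sigma>(0) = 0 this is a bijection from pairs
  (\<sigma>, T) onto signed permutations, which gives the formula for hatB. Read from position 1, the
  signed word standardises to an ordinary permutation, and each of the 2^n sets of negated values
  contributes hatA.\<close>

lemma sum_Pow_power_card: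
  fixes x :: "'a::comm_ring_1"
  assumes "finite I" "finite V"
  shows "(\<Sum>T\<in>Pow V. x ^ card {i\<in>I. f i \<in> T}) = (\<Prod>v\<in>V. 1 + x ^ card {i\<in>I. f i = v})"
proof -
  have card_vimage: "card {i\<in>I. f i \<in> T} = (\<Sum>v\<in>T. card {i\<in>I. f i = v})" if "T \<subseteq> V" for T
  proof -
    have "{i\<in>I. f i \<in> T} = (\<Union>v\<in>T. {i\<in>I. f i = v})" by auto
    moreover have "finite T" using that assms finite_subset by blast
    ultimately show ?thesis using assms by (auto intro: card_UN_disjoint)
  qed
  have "(\<Prod>v\<in>V. 1 + x ^ card {i\<in>I. f i = v}) = (\<Prod>v\<in>V. x ^ card {i\<in>I. f i = v} + 1)"
    by (simp add: add.commute)
  also have "\<dots> = (\<Sum>X\<in>Pow V. (\<Prod>v\<in>X. x ^ card {i\<in>I. f i = v}) * (\<Prod>v\<in>V-X. 1))"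
    by (rule prod_add[OF assms(2)])
  also have "\<dots> = (\<Sum>T\<in>Pow V. x ^ card {i\<in>I. f i \<in> T})"
    by (rule sum.cong) (auto simp: card_vimage power_sum)
  finally show ?thesis ..
qed

definition alt_descents :: "nat \<Rightarrow> nat \<Rightarrow> (nat \<Rightarrow> 'a::linorder) \<Rightarrow> nat" where
  "alt_descents lo n w = card {i\<in>{lo..<n}. (w i > w (Suc i) \<and> odd i) \<or> (w i < w (Suc i) \<and> even i)}"

lemma alt_descents_cong:
  assumes "\<And>k. k \<in> {lo..n} \<Longrightarrow> w k = w' k"
  shows "alt_descents lo n w = alt_descents lo n w'"
proof -
  have "w i = w' i" "w (Suc i) = w' (Suc i)" if "i \<in> {lo..<n}" for i
    using that assms by auto
  then show ?thesis unfolding alt_descents_def by (intro arg_cong[where f=card] Collect_cong) auto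
qed

lemma alt_descents_comp_strict_mono:
  assumes "strict_mono_on A f" "w ` {lo..n} \<subseteq> A"
  shows "alt_descents lo n (f \<circ> w) = alt_descents lo n w"
proof -
  have "w i \<in> A" "w (Suc i) \<in> A" if "i \<in> {lo..<n}" for i
    using that assms(2) by auto
  then show ?thesis unfolding alt_descents_def
    by (intro arg_cong[where f=card] Collect_cong) (auto simp: strict_mono_on_less[OF assms(1)])
qed

lemma altdes_eq_alt_descents: "altdes n \<sigma> = alt_descents 1 n \<sigma>"
  by (simp add: altdes_def alt_descents_def)

lemma altdesB_eq_alt_descents: "altdesB n \<pi> = alt_descents 0 n (\<pi> \<circ> int)"
  unfolding altdesB_def alt_descents_def by (intro arg_cong[where f=card] Collect_cong) (auto simp: add.commute)

definition max_edges_in :: "nat \<Rightarrow> nat \<Rightarrow> (nat \<Rightarrow> nat) \<Rightarrow> nat set \<Rightarrow> nat" where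
  "max_edges_in lo n \<sigma> T = card {i\<in>{lo..<n}. max (\<sigma> i) (\<sigma> (Suc i)) \<in> T}"

definition signed_word :: "(nat \<Rightarrow> nat) \<Rightarrow> nat set \<Rightarrow> nat \<Rightarrow> int" where
  "signed_word \<sigma> T k = (if (\<sigma> k \<in> T) = odd k then int (\<sigma> k) else - int (\<sigma> k))"

lemma alt_descents_signed_word:
  assumes "inj \<sigma>"
  shows "alt_descents lo n (signed_word \<sigma> T) = max_edges_in lo n \<sigma> T"
proof -
  have "(max (\<sigma> i) (\<sigma> (Suc i)) \<in> T) \<longleftrightarrow>
      (signed_word \<sigma> T i > signed_word \<sigma> T (Suc i) \<and> odd i) \<or>
      (signed_word \<sigma> T i < signed_word \<sigma> T (Suc i) \<and> even i)" for i
  proof -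
    have "\<sigma> i \<noteq> \<sigma> (Suc i)" using assms by (metis inj_eq n_not_Suc_n)
    then show ?thesis
      by (cases "\<sigma> i < \<sigma> (Suc i)"; cases "\<sigma> i \<in> T"; cases "\<sigma> (Suc i) \<in> T"; cases "odd i")
        (auto simp: signed_word_def max_def)
  qed
  then show ?thesis unfolding alt_descents_def max_edges_in_def by simp
qed

definition smaller_neighbours :: "(nat \<Rightarrow> nat) \<Rightarrow> nat \<Rightarrow> nat" where
  "smaller_neighbours e j = (if e (j-1) < e j then 1 else 0) + (if e (j+1) < e j then 1 else 0)"

lemma prod_smaller_neighbours:
  fixes x :: "'a::comm_ring_1"
  assumes p: "\<sigma> permutes {1..n}" and a: "a \<notin> {1..n}" and b: "b \<notin> {1..n}"
  shows "(\<Prod>j\<in>{1..n}. 1 + x ^ smaller_neighbours (ext a b n \<sigma>) j)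
     = (1+x) ^ dda a b n \<sigma> * 2 ^ val a b n \<sigma> * (1+x^2) ^ pk a b n \<sigma>"
proof -
  define e where "e = ext a b n \<sigma>"
  have ej: "e j = \<sigma> j" "e j \<in> {1..n}" if "j \<in> {1..n}" for j
    using that permutes_in_image[OF p] by (auto simp: e_def ext_def)
  have inj_e: "e i \<noteq> e j" if "i \<in> {0..n+1}" "j \<in> {1..n}" "i \<noteq> j" for i j
    using that a b ej permutes_inj[OF p] by (auto simp: e_def ext_def inj_eq)
  define D where "D = {i \<in> {1..n}. (e (i-1) < e i \<and> e i < e (i+1)) \<or> (e (i-1) > e i \<and> e i > e (i+1))}"
  define V where "V = {i \<in> {1..n}. e (i-1) > e i \<and> e i < e (i+1)}"
  define P where "P = {i \<in> {1..n}. e (i-1) < e i \<and> e i > e (i+1)}"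
  have stats: "dda a b n \<sigma> = card D" "val a b n \<sigma> = card V" "pk a b n \<sigma> = card P"
    by (simp_all add: dda_def val_def pk_def D_def V_def P_def e_def Let_def)
  have "{1..n} = D \<union> V \<union> P"
  proof (intro equalityI subsetI)
    fix j assume j: "j \<in> {1..n}"
    then have "j - 1 \<in> {0..n+1}" "j + 1 \<in> {0..n+1}" "j - 1 \<noteq> j" "j + 1 \<noteq> j" by auto
    then have "e (j-1) \<noteq> e j" "e (j+1) \<noteq> e j" using inj_e j by blast+
    then show "j \<in> D \<union> V \<union> P" using j unfolding D_def V_def P_def
      by (cases "e (j-1) < e j"; cases "e j < e (j+1)") auto
  qed (auto simp: D_def V_def P_def)
  moreover have "finite D" "finite V" "finite P" "D \<inter> V = {}" "(D \<union> V) \<inter> P = {}"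
    by (auto simp: D_def V_def P_def)
  moreover have "(\<Prod>j\<in>D. 1 + x ^ smaller_neighbours e j) = (\<Prod>j\<in>D. 1 + x)"
    by (rule prod.cong) (auto simp: D_def smaller_neighbours_def)
  moreover have "(\<Prod>j\<in>V. 1 + x ^ smaller_neighbours e j) = (\<Prod>j\<in>V. 2)"
    by (rule prod.cong) (auto simp: V_def smaller_neighbours_def)
  moreover have "(\<Prod>j\<in>P. 1 + x ^ smaller_neighbours e j) = (\<Prod>j\<in>P. 1 + x^2)"
    by (rule prod.cong) (auto simp: P_def smaller_neighbours_def power2_eq_square)
  ultimately show ?thesis unfolding stats e_def[symmetric] by (simp add: prod.union_disjoint)
qed

text \<open>With lo = 0 the extra edge (0, 1) has top letter \<sigma> 1 because \<sigma> 0 = 0; it plays the role of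
  the ascent from the boundary value a = 0.\<close>

lemma card_max_edges_eq_smaller_neighbours:
  assumes p: "\<sigma> permutes {1..n}" and j: "j \<in> {1..n}"
    and boundary: "(lo = 1 \<and> a = n+1) \<or> (lo = 0 \<and> a = 0)"
  shows "card {i\<in>{lo..<n}. max (\<sigma> i) (\<sigma> (Suc i)) = \<sigma> j} = smaller_neighbours (ext a (n+1) n \<sigma>) j"
proof -
  define e where "e = ext a (n+1) n \<sigma>"
  have eq: "\<sigma> u = \<sigma> v \<longleftrightarrow> u = v" for u v using permutes_inj[OF p] by (meson inj_eq)
  have \<sigma>0: "\<sigma> 0 = 0" using permutes_not_in[OF p] by simp
  have \<sigma>j: "\<sigma> j \<in> {1..n}" using permutes_in_image[OF p] j by simp
  define left where "left = (lo \<le> j-1 \<and> \<sigma> (j-1) < \<sigma> j)"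
  define right where "right = (j < n \<and> \<sigma> (Suc j) < \<sigma> j)"
  have top: "max (\<sigma> i) (\<sigma> (Suc i)) = \<sigma> j \<longleftrightarrow> (i = j \<and> \<sigma> (Suc j) < \<sigma> j) \<or> (Suc i = j \<and> \<sigma> i < \<sigma> j)" for i
    using eq[of i j] eq[of "Suc i" j] eq[of i "Suc i"] by (auto simp: max_def)
  have "{i\<in>{lo..<n}. max (\<sigma> i) (\<sigma> (Suc i)) = \<sigma> j} = {i. i = j - 1 \<and> left} \<union> {i. i = j \<and> right}"
    unfolding top left_def right_def using j boundary by auto
  moreover have "j - 1 \<noteq> j" using j by auto
  moreover have "left = (e (j-1) < e j)" "right = (e (j+1) < e j)"
    using j boundary \<sigma>0 \<sigma>j by (auto simp: left_def right_def e_def ext_def)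
  ultimately show ?thesis unfolding e_def[symmetric] smaller_neighbours_def by (auto simp: card_insert_if)
qed

lemma peak_valley_weight_eq_sum_Pow:
  fixes x :: "'a::comm_ring_1"
  assumes p: "\<sigma> permutes {1..n}" and boundary: "(lo = 1 \<and> a = n+1) \<or> (lo = 0 \<and> a = 0)"
  shows "(1+x) ^ dda a (n+1) n \<sigma> * 2 ^ val a (n+1) n \<sigma> * (1+x^2) ^ pk a (n+1) n \<sigma>
     = (\<Sum>T\<in>Pow {1..n}. x ^ max_edges_in lo n \<sigma> T)"
proof -
  let ?top = "\<lambda>i. max (\<sigma> i) (\<sigma> (Suc i))"
  have "(\<Sum>T\<in>Pow {1..n}. x ^ max_edges_in lo n \<sigma> T) = (\<Prod>v\<in>{1..n}. 1 + x ^ card {i\<in>{lo..<n}. ?top i = v})"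
    unfolding max_edges_in_def by (rule sum_Pow_power_card) auto
  also have "\<dots> = (\<Prod>j\<in>{1..n}. 1 + x ^ card {i\<in>{lo..<n}. ?top i = \<sigma> j})"
    by (rule prod.reindex_bij_betw[symmetric]) (rule permutes_imp_bij[OF p])
  also have "\<dots> = (\<Prod>j\<in>{1..n}. 1 + x ^ smaller_neighbours (ext a (n+1) n \<sigma>) j)"
    using card_max_edges_eq_smaller_neighbours[OF p _ boundary] by simp
  also have "\<dots> = (1+x) ^ dda a (n+1) n \<sigma> * 2 ^ val a (n+1) n \<sigma> * (1+x^2) ^ pk a (n+1) n \<sigma>"
    using boundary by (intro prod_smaller_neighbours[OF p]) auto
  finally show ?thesis ..
qed

lemma ex_permutes_strict_mono_comp:
  fixes f :: "nat \<Rightarrow> 'b::linorder"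
  assumes f: "inj_on f {1..n}"
  obtains h where "h permutes {1..n}" "strict_mono_on {1..n} (f \<circ> h)"
proof -
  define L where "L = sorted_list_of_set (f ` {1..n})"
  have len: "length L = n" using f by (simp add: L_def card_image)
  define g where "g k = L ! (k - 1)" for k
  have g_in: "g k \<in> f ` {1..n}" if "k \<in> {1..n}" for k
    using that len nth_mem[of "k - 1" L] by (auto simp: g_def L_def)
  have sorted: "sorted_wrt (<) L" by (simp add: L_def)
  have g_mono: "strict_mono_on {1..n} g"
  proof (rule strict_mono_onI)
    fix r s assume "r \<in> {1..n}" "s \<in> {1..n}" "r < s"
    then show "g r < g s" using sorted_wrt_nth_less[OF sorted, of "r - 1" "s - 1"] len
      by (auto simp: g_def)
  qed
  define h where "h k = (if k \<in> {1..n} then the_inv_into {1..n} f (g k) else k)" for k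
  have fh: "f (h k) = g k" if "k \<in> {1..n}" for k
    using that g_in f by (simp add: h_def f_the_inv_into_f)
  have "h permutes {1..n}"
  proof (rule inj_imp_permutes)
    show "inj_on h {1..n}"
    proof (rule inj_onI)
      fix a b assume "a \<in> {1..n}" "b \<in> {1..n}" "h a = h b"
      then show "a = b" using fh strict_mono_on_imp_inj_on[OF g_mono] by (metis inj_onD)
    qed
    show "h k \<in> {1..n}" if "k \<in> {1..n}" for k
      using that the_inv_into_into[OF f g_in[OF that] order_refl] by (simp add: h_def)
  qed (auto simp: h_def)
  moreover have "strict_mono_on {1..n} (f \<circ> h)"
    using g_mono fh by (auto simp: strict_mono_on_def)
  ultimately show thesis ..
qed

definition negate_on :: "nat set \<Rightarrow> nat \<Rightarrow> int" where
  "negate_on C v = (if v \<in> C then - int v else int v)"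

lemma inj_negate_on: "inj (negate_on C)"
  by (rule inj_onI) (auto simp: negate_on_def split: if_splits)

lemma sum_perms_alt_descents_comp:
  fixes x :: "'a::comm_ring_1" and f :: "nat \<Rightarrow> 'b::linorder"
  assumes "inj_on f {1..n}"
  shows "(\<Sum>\<sigma>\<in>perms n. x ^ alt_descents 1 n (f \<circ> \<sigma>)) = hatA n x"
proof -
  obtain h where h: "h permutes {1..n}" "strict_mono_on {1..n} (f \<circ> h)"
    using ex_permutes_strict_mono_comp[OF assms] by blast
  have "(\<Sum>\<sigma>\<in>perms n. x ^ alt_descents 1 n (f \<circ> \<sigma>)) = (\<Sum>\<tau>\<in>perms n. x ^ alt_descents 1 n (f \<circ> (h \<circ> \<tau>)))"
    unfolding perms_def by (rule setum_permutations_compose_left[OF h(1)])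
  also have "\<dots> = (\<Sum>\<tau>\<in>perms n. x ^ altdes n \<tau>)"
  proof (rule sum.cong[OF refl])
    fix \<tau> assume "\<tau> \<in> perms n"
    then have "\<tau> ` {1..n} \<subseteq> {1..n}" by (simp add: perms_def permutes_image)
    then show "x ^ alt_descents 1 n (f \<circ> (h \<circ> \<tau>)) = x ^ altdes n \<tau>"
      using alt_descents_comp_strict_mono[OF h(2)] by (simp add: comp_assoc altdes_eq_alt_descents)
  qed
  finally show ?thesis by (simp add: hatA_def)
qed

lemma sum_max_edges_eq_hatA:
  fixes x :: "'a::comm_ring_1"
  shows "(\<Sum>\<sigma>\<in>perms n. \<Sum>T\<in>Pow {1..n}. x ^ max_edges_in 1 n \<sigma> T) = 2 ^ n * hatA n x"
proof -
  have negations: "(\<Sum>T\<in>Pow {1..n}. x ^ max_edges_in 1 n \<sigma> T)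
      = (\<Sum>C\<in>Pow {1..n}. x ^ alt_descents 1 n (negate_on C \<circ> \<sigma>))" if "\<sigma> \<in> perms n" for \<sigma>
  proof -
    have p: "\<sigma> permutes {1..n}" using that by (simp add: perms_def)
    define neg where "neg T = {v\<in>{1..n}. (v \<in> T) \<noteq> odd (inv \<sigma> v)}" for T
    have "signed_word \<sigma> T k = (negate_on (neg T) \<circ> \<sigma>) k" if "k \<in> {1..n}" for T k
      using that permutes_in_image[OF p] permutes_inverses(2)[OF p]
      by (auto simp: signed_word_def negate_on_def neg_def)
    then have "max_edges_in 1 n \<sigma> T = alt_descents 1 n (negate_on (neg T) \<circ> \<sigma>)" for T
      using alt_descents_signed_word[OF permutes_inj[OF p], symmetric] alt_descents_cong by metis
    then have "(\<Sum>T\<in>Pow {1..n}. x ^ max_edges_in 1 n \<sigma> T)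
        = (\<Sum>T\<in>Pow {1..n}. x ^ alt_descents 1 n (negate_on (neg T) \<circ> \<sigma>))" by simp
    also have "\<dots> = (\<Sum>C\<in>Pow {1..n}. x ^ alt_descents 1 n (negate_on C \<circ> \<sigma>))"
      by (rule sum.reindex_bij_betw) (rule bij_betwI[where g=neg]; auto simp: neg_def)
    finally show ?thesis .
  qed
  have "(\<Sum>\<sigma>\<in>perms n. \<Sum>T\<in>Pow {1..n}. x ^ max_edges_in 1 n \<sigma> T)
      = (\<Sum>\<sigma>\<in>perms n. \<Sum>C\<in>Pow {1..n}. x ^ alt_descents 1 n (negate_on C \<circ> \<sigma>))"
    by (rule sum.cong[OF refl], rule negations)
  also have "\<dots> = (\<Sum>C\<in>Pow {1..n}. \<Sum>\<sigma>\<in>perms n. x ^ alt_descents 1 n (negate_on C \<circ> \<sigma>))"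
    by (rule sum.swap)
  also have "\<dots> = (\<Sum>C\<in>Pow {1..n}. hatA n x)"
    by (intro sum.cong refl sum_perms_alt_descents_comp) (simp add: inj_on_subset[OF inj_negate_on])
  finally show ?thesis by (simp add: card_Pow)
qed

definition signed_perm_of :: "nat \<Rightarrow> (nat \<Rightarrow> nat) \<Rightarrow> nat set \<Rightarrow> int \<Rightarrow> int" where
  "signed_perm_of n \<sigma> T i = (if i \<in> {- int n..int n} then sgn i * signed_word \<sigma> T (nat \<bar>i\<bar>) else i)"

definition unsigned_perm :: "nat \<Rightarrow> (int \<Rightarrow> int) \<Rightarrow> nat \<Rightarrow> nat" where
  "unsigned_perm n \<pi> k = (if k \<in> {1..n} then nat \<bar>\<pi> (int k)\<bar> else k)"

definition parity_set :: "nat \<Rightarrow> (int \<Rightarrow> int) \<Rightarrow> nat set" where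
  "parity_set n \<pi> = unsigned_perm n \<pi> ` {k\<in>{1..n}. (\<pi> (int k) > 0) = odd k}"

lemma abs_signed_word [simp]: "\<bar>signed_word \<sigma> T k\<bar> = int (\<sigma> k)"
  by (simp add: signed_word_def)

lemma signed_word_eq_0_iff [simp]: "signed_word \<sigma> T k = 0 \<longleftrightarrow> \<sigma> k = 0"
  by (simp add: signed_word_def)

lemma signed_perm_of_int:
  assumes "\<sigma> permutes {1..n}" "k \<le> n"
  shows "signed_perm_of n \<sigma> T (int k) = signed_word \<sigma> T k"
  using assms permutes_not_in[OF assms(1), of 0] by (cases "k = 0") (auto simp: signed_perm_of_def signed_word_def)

lemma signed_perm_of_in_signed_perms:
  assumes p: "\<sigma> permutes {1..n}"
  shows "signed_perm_of n \<sigma> T \<in> signed_perms n"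
proof -
  let ?S = "{- int n..int n} - {0}"
  have abs_\<pi>: "\<bar>signed_perm_of n \<sigma> T i\<bar> = int (\<sigma> (nat \<bar>i\<bar>))" "\<sigma> (nat \<bar>i\<bar>) \<in> {1..n}" if "i \<in> ?S" for i
  proof -
    have "nat \<bar>i\<bar> \<in> {1..n}" using that by auto
    then show "\<sigma> (nat \<bar>i\<bar>) \<in> {1..n}" using permutes_in_image[OF p] by blast
    show "\<bar>signed_perm_of n \<sigma> T i\<bar> = int (\<sigma> (nat \<bar>i\<bar>))"
      using that by (simp add: signed_perm_of_def abs_mult)
  qed
  have "signed_perm_of n \<sigma> T permutes ?S"
  proof (rule inj_imp_permutes)
    show "inj_on (signed_perm_of n \<sigma> T) ?S"
    proof (rule inj_onI)
      fix i j assume i: "i \<in> ?S" and j: "j \<in> ?S" and eq: "signed_perm_of n \<sigma> T i = signed_perm_of n \<sigma> T j"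
      then have "\<sigma> (nat \<bar>i\<bar>) = \<sigma> (nat \<bar>j\<bar>)" using abs_\<pi>(1)[OF i] abs_\<pi>(1)[OF j] by simp
      then have "nat \<bar>i\<bar> = nat \<bar>j\<bar>" by (rule injD[OF permutes_inj[OF p]])
      then have "\<bar>i\<bar> = \<bar>j\<bar>" by simp
      moreover have "signed_word \<sigma> T (nat \<bar>i\<bar>) \<noteq> 0"
        using abs_\<pi>(2)[OF i] by simp
      moreover have "sgn i * signed_word \<sigma> T (nat \<bar>i\<bar>) = sgn j * signed_word \<sigma> T (nat \<bar>j\<bar>)"
        using eq i j by (simp add: signed_perm_of_def)
      ultimately have "sgn i = sgn j" using \<open>\<bar>i\<bar> = \<bar>j\<bar>\<close> by simp
      then show "i = j" using \<open>\<bar>i\<bar> = \<bar>j\<bar>\<close> by (metis sgn_mult_abs)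
    qed
    show "signed_perm_of n \<sigma> T i \<in> ?S" if "i \<in> ?S" for i
      using abs_\<pi>[OF that] by auto
  qed (auto simp: signed_perm_of_def)
  moreover have "signed_perm_of n \<sigma> T (- i) = - signed_perm_of n \<sigma> T i" for i
    by (simp add: signed_perm_of_def)
  ultimately show ?thesis by (simp add: signed_perms_def)
qed

lemma altdesB_signed_perm_of:
  assumes p: "\<sigma> permutes {1..n}"
  shows "altdesB n (signed_perm_of n \<sigma> T) = max_edges_in 0 n \<sigma> T"
proof -
  have "altdesB n (signed_perm_of n \<sigma> T) = alt_descents 0 n (signed_word \<sigma> T)"
    unfolding altdesB_eq_alt_descents by (rule alt_descents_cong) (simp add: signed_perm_of_int[OF p])
  then show ?thesis by (simp add: alt_descents_signed_word[OF permutes_inj[OF p]])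
qed

lemma unsigned_perm_permutes:
  assumes "\<pi> \<in> signed_perms n"
  shows "unsigned_perm n \<pi> permutes {1..n}"
proof -
  let ?S = "{- int n..int n} - {0}"
  have p: "\<pi> permutes ?S" and odd: "\<And>i. \<pi> (- i) = - \<pi> i" using assms by (auto simp: signed_perms_def)
  have \<pi>_in: "\<pi> (int k) \<in> ?S" if "k \<in> {1..n}" for k
    using that permutes_in_image[OF p, of "int k"] by auto
  show ?thesis
  proof (rule inj_imp_permutes)
    show "inj_on (unsigned_perm n \<pi>) {1..n}"
    proof (rule inj_onI)
      fix a b assume a: "a \<in> {1..n}" and b: "b \<in> {1..n}" and "unsigned_perm n \<pi> a = unsigned_perm n \<pi> b"
      then have "\<bar>\<pi> (int a)\<bar> = \<bar>\<pi> (int b)\<bar>" by (simp add: unsigned_perm_def)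
      then have "\<pi> (int a) = \<pi> (int b) \<or> \<pi> (int a) = \<pi> (- int b)" using odd by (auto simp: abs_if split: if_splits)
      then have "int a = int b \<or> int a = - int b" using injD[OF permutes_inj[OF p]] by blast
      then show "a = b" using a b by auto
    qed
    show "unsigned_perm n \<pi> k \<in> {1..n}" if "k \<in> {1..n}" for k
      using that \<pi>_in[OF that] by (auto simp: unsigned_perm_def)
  qed (auto simp: unsigned_perm_def)
qed

lemma signed_perm_of_unsigned_perm:
  assumes "\<pi> \<in> signed_perms n"
  shows "signed_perm_of n (unsigned_perm n \<pi>) (parity_set n \<pi>) = \<pi>"
proof
  fix i
  let ?S = "{- int n..int n} - {0}"
  let ?\<sigma> = "unsigned_perm n \<pi>"
  have p: "\<pi> permutes ?S" and odd: "\<And>i. \<pi> (- i) = - \<pi> i" using assms by (auto simp: signed_perms_def)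
  have word: "signed_word ?\<sigma> (parity_set n \<pi>) k = \<pi> (int k)" if k: "k \<in> {1..n}" for k
  proof -
    have "?\<sigma> k \<in> parity_set n \<pi> \<longleftrightarrow> (\<pi> (int k) > 0) = odd k"
      unfolding parity_set_def using k permutes_inj_on[OF unsigned_perm_permutes[OF assms]]
      by (auto simp: inj_on_image_mem_iff)
    moreover have "\<pi> (int k) \<noteq> 0" using k permutes_in_image[OF p, of "int k"] by auto
    ultimately show ?thesis using k by (auto simp: signed_word_def unsigned_perm_def)
  qed
  show "signed_perm_of n ?\<sigma> (parity_set n \<pi>) i = \<pi> i"
  proof (cases "i \<in> ?S")
    case True
    then have "nat \<bar>i\<bar> \<in> {1..n}" by auto
    then show ?thesis using True word[of "nat \<bar>i\<bar>"] odd[of i] by (auto simp: signed_perm_of_def sgn_if)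
  next
    case False
    then show ?thesis using permutes_not_in[OF p] by (auto simp: signed_perm_of_def)
  qed
qed

lemma unsigned_perm_signed_perm_of:
  assumes p: "\<sigma> permutes {1..n}" and T: "T \<subseteq> {1..n}"
  shows "unsigned_perm n (signed_perm_of n \<sigma> T) = \<sigma>" "parity_set n (signed_perm_of n \<sigma> T) = T"
proof -
  have word: "signed_perm_of n \<sigma> T (int k) = signed_word \<sigma> T k" if "k \<in> {1..n}" for k
    using that by (simp add: signed_perm_of_int[OF p])
  show \<sigma>: "unsigned_perm n (signed_perm_of n \<sigma> T) = \<sigma>"
    using word permutes_not_in[OF p] by (auto simp: unsigned_perm_def)
  have "(signed_word \<sigma> T k > 0) = odd k \<longleftrightarrow> \<sigma> k \<in> T" if "k \<in> {1..n}" for k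
    using that permutes_in_image[OF p, of k] by (auto simp: signed_word_def)
  then have "parity_set n (signed_perm_of n \<sigma> T) = \<sigma> ` {k\<in>{1..n}. \<sigma> k \<in> T}"
    unfolding parity_set_def \<sigma> using word by (metis (no_types, lifting))
  also have "\<dots> = \<sigma> ` {1..n} \<inter> T" by blast
  also have "\<dots> = T" using T permutes_image[OF p] by auto
  finally show "parity_set n (signed_perm_of n \<sigma> T) = T" .
qed

lemma bij_betw_signed_perm_of:
  "bij_betw (\<lambda>(\<sigma>, T). signed_perm_of n \<sigma> T) (perms n \<times> Pow {1..n}) (signed_perms n)"
proof (rule bij_betwI[where g="\<lambda>\<pi>. (unsigned_perm n \<pi>, parity_set n \<pi>)"])
  show "(\<lambda>(\<sigma>, T). signed_perm_of n \<sigma> T) \<in> perms n \<times> Pow {1..n} \<rightarrow> signed_perms n"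
    by (auto simp: perms_def signed_perm_of_in_signed_perms)
  show "(\<lambda>\<pi>. (unsigned_perm n \<pi>, parity_set n \<pi>)) \<in> signed_perms n \<rightarrow> perms n \<times> Pow {1..n}"
    using unsigned_perm_permutes permutes_image by (fastforce simp: perms_def parity_set_def)
qed (auto simp: perms_def signed_perm_of_unsigned_perm unsigned_perm_signed_perm_of)

lemma hatB_eq_sum_max_edges:
  fixes x :: "'a::comm_ring_1"
  shows "hatB n x = (\<Sum>\<sigma>\<in>perms n. \<Sum>T\<in>Pow {1..n}. x ^ max_edges_in 0 n \<sigma> T)"
proof -
  have "hatB n x = (\<Sum>p\<in>perms n \<times> Pow {1..n}. x ^ altdesB n ((\<lambda>(\<sigma>, T). signed_perm_of n \<sigma> T) p))"
    unfolding hatB_def by (rule sum.reindex_bij_betw[OF bij_betw_signed_perm_of, symmetric])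
  also have "\<dots> = (\<Sum>(\<sigma>, T)\<in>perms n \<times> Pow {1..n}. x ^ max_edges_in 0 n \<sigma> T)"
    by (rule sum.cong) (auto simp: perms_def altdesB_signed_perm_of)
  finally show ?thesis by (simp add: sum.cartesian_product)
qed

theorem theorem1p1:
  fixes n :: nat and x :: "'a::comm_ring_1"
  assumes "n \<ge> 1"
  shows "2 ^ n * hatA n x =
           (\<Sum>\<sigma>\<in>perms n. (1 + x) ^ dda (n+1) (n+1) n \<sigma> * 2 ^ val (n+1) (n+1) n \<sigma>
                              * (1 + x^2) ^ pk (n+1) (n+1) n \<sigma>)
       \<and> hatB n x =
           (\<Sum>\<sigma>\<in>perms n. (1 + x) ^ dda 0 (n+1) n \<sigma> * 2 ^ val 0 (n+1) n \<sigma>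
                              * (1 + x^2) ^ pk 0 (n+1) n \<sigma>)"
proof -
  have "(\<Sum>\<sigma>\<in>perms n. (1 + x) ^ dda (n+1) (n+1) n \<sigma> * 2 ^ val (n+1) (n+1) n \<sigma>
                              * (1 + x^2) ^ pk (n+1) (n+1) n \<sigma>)
      = (\<Sum>\<sigma>\<in>perms n. \<Sum>T\<in>Pow {1..n}. x ^ max_edges_in 1 n \<sigma> T)"
    by (rule sum.cong[OF refl], rule peak_valley_weight_eq_sum_Pow) (auto simp: perms_def)
  moreover have "(\<Sum>\<sigma>\<in>perms n. (1 + x) ^ dda 0 (n+1) n \<sigma> * 2 ^ val 0 (n+1) n \<sigma>
                              * (1 + x^2) ^ pk 0 (n+1) n \<sigma>)
      = (\<Sum>\<sigma>\<in>perms n. \<Sum>T\<in>Pow {1..n}. x ^ max_edges_in 0 n \<sigma> T)"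
    by (rule sum.cong[OF refl], rule peak_valley_weight_eq_sum_Pow) (auto simp: perms_def)
  ultimately show ?thesis
    using sum_max_edges_eq_hatA[of x n] hatB_eq_sum_max_edges[of n x] by simp
qed

end
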